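(* For non-zero integers $a,b$ let $f_{a,b}:(0,\infty)\to(0,\infty)$, $f_{a,b}(z)=z^{a/b}$ (real positive branch). Let $I\subseteq(0,\infty)$ have non-empty interior. Then there exist uncountably many $\zeta\in\mathscr{L}\cap(0,\infty)$ such that $f_{a,b}(\zeta)\in\mathscr{L}$ simultaneously for all non-zero integers $a,b$. Moreover, for any fixed non-zero integers $a,b$, there are uncountably many $\zeta\in\mathscr{L}\cap I$ with $f_{a,b}(\zeta)\in\mathscr{L}$.
   Context: $\mathscr{L}$ is the set of Liouville numbers (real irrational $\zeta$ such that for every $\eta>0$ there are infinitely many rationals $y/x$, $x\geq1$, with $|\zeta-y/x|\leq x^{-\eta}$). *)

theory Defs
  imports "HOL-Analysis.Analysis"
begin

definition liouville_set :: "real set" where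
  "liouville_set = {\<zeta>. \<zeta> \<notin> \<rat> \<and>
     (\<forall>\<eta>::real. \<eta> > 0 \<longrightarrow>
        infinite {(y::int, x::int). x \<ge> 1 \<and>
                    \<bar>\<zeta> - of_int y / of_int x\<bar> \<le> (of_int x) powr (- \<eta>)})}"

end

theory Submission imports Defs begin

(* A real that has, for every n, a rational p/q with q \<ge> 2 and 0 < |x - p/q| < q^-n is a
   Liouville number. For each n these reals form a dense open set, and so do their preimages under
   the homeomorphisms z \<mapsto> z powr r of (0,\<infinity>), r a nonzero rational. The countably many
   conditions together cut out a dense G\<delta>, which by Baire's theorem meets every nonempty open
   set in uncountably many points. *)

lemma uncountable_Int_Inter_dense_open:
  fixes U :: "'a::{real_normed_vector,heine_borel,perfect_space} set"
  assumes "open U" "U \<noteq> {}" "countable \<G>"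
    and dense_open: "\<And>T. T \<in> \<G> \<Longrightarrow> open T \<and> U \<subseteq> closure T"
  shows "uncountable (U \<inter> \<Inter>\<G>)"
proof
  assume countable_X: "countable (U \<inter> \<Inter>\<G>)"
  obtain c e where "e > 0" and ball_U: "ball c e \<subseteq> U"
    using assms(1,2) open_contains_ball by blast
  define K where "K = cball c (e/2)"
  have "K \<subseteq> ball c e" using \<open>e > 0\<close> unfolding K_def by (auto simp: subset_eq)
  with ball_U have K_U: "K \<subseteq> U" by blast
  text \<open>Baire's theorem on the whole space, applied to the members of \<open>\<G>\<close> padded outside \<open>K\<close>
    and to the complements of the (countably many) points of \<open>U \<inter> \<Inter>\<G>\<close>.\<close>
  define \<H> where "\<H> = (\<lambda>T. T \<union> - K) ` \<G> \<union> (\<lambda>x. - {x}) ` (U \<inter> \<Inter>\<G>)"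
  have "UNIV \<subseteq> closure (\<Inter>\<H>)"
  proof (rule Baire)
    show "countable \<H>" using \<open>countable \<G>\<close> countable_X by (simp add: \<H>_def)
    fix T assume "T \<in> \<H>"
    then consider S where "S \<in> \<G>" "T = S \<union> - K" | x where "T = - {x}"
      unfolding \<H>_def by blast
    then show "openin (top_of_set UNIV) T \<and> UNIV \<subseteq> closure T"
    proof cases
      case 1
      have "open T" unfolding 1(2) K_def using dense_open[OF 1(1)] by (simp add: open_Un open_Compl)
      moreover have "UNIV \<subseteq> closure T"
      proof -
        have "closure S \<subseteq> closure T" unfolding 1(2) by (rule closure_mono) blast
        then have "K \<subseteq> closure T" using K_U dense_open[OF 1(1)] by (meson subset_trans)
        moreover have "- K \<subseteq> closure T" using closure_subset[of T] unfolding 1(2) by blast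
        ultimately show ?thesis by blast
      qed
      ultimately show ?thesis by simp
    next
      case 2
      have "open T" unfolding 2 by (rule open_Compl) simp
      moreover have "closure T = UNIV" unfolding 2 closure_complement by simp
      ultimately show ?thesis by simp
    qed
  qed simp
  then have "c \<in> closure (\<Inter>\<H>)" by blast
  then obtain y where y: "y \<in> \<Inter>\<H>" "dist y c < e/2"
    using \<open>e > 0\<close> by (metis closure_approachable half_gt_zero)
  have "y \<in> K" using y(2) by (simp add: K_def dist_commute)
  have "y \<in> T" if "T \<in> \<G>" for T
  proof -
    have "T \<union> - K \<in> \<H>" using that unfolding \<H>_def by blast
    then show ?thesis using y(1) \<open>y \<in> K\<close> by blast
  qed
  with \<open>y \<in> K\<close> K_U have "- {y} \<in> \<H>" unfolding \<H>_def by blast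
  with y(1) show False by blast
qed

text \<open>Requiring \<open>q \<ge> 2\<close> makes the tolerance \<open>1/q^n \<le> 1/2^n\<close> uniformly small in \<open>n\<close>.\<close>
definition liouville_approximable :: "nat \<Rightarrow> real set" where
  "liouville_approximable n =
     {z. \<exists>p q :: int. q \<ge> 2 \<and> z \<noteq> of_int p / of_int q \<and> \<bar>z - of_int p / of_int q\<bar> < 1 / of_int q ^ n}"

lemma open_liouville_approximable: "open (liouville_approximable n)"
proof -
  have "liouville_approximable n =
      (\<Union>(p, q) \<in> {(p::int, q::int). q \<ge> 2}. ball (of_int p / of_int q) (1 / of_int q ^ n) - {of_int p / of_int q})"
    unfolding liouville_approximable_def by (force simp: dist_real_def abs_minus_commute)
  then show ?thesis by (auto intro!: open_Diff)
qed

lemma closure_liouville_approximable: "closure (liouville_approximable n) = UNIV"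
proof -
  have "r \<in> closure (liouville_approximable n)" if "r \<in> \<rat>" for r
  proof (unfold closure_approachable, intro allI impI)
    fix \<epsilon> :: real assume "\<epsilon> > 0"
    obtain p q :: int where "q > 0" and r: "r = of_int p / of_int q" using \<open>r \<in> \<rat>\<close> Rats_cases' by metis
    text \<open>Write \<open>r\<close> with an even denominator, so that the denominator is at least 2.\<close>
    have r2: "r = of_int (2*p) / of_int (2*q)" using r by simp
    define tol :: real where "tol = 1 / of_int (2*q) ^ n"
    have "tol > 0" using \<open>q > 0\<close> by (simp add: tol_def)
    define \<delta> where "\<delta> = min (\<epsilon>/2) (tol/2)"
    have \<delta>: "0 < \<delta>" "\<delta> < tol" "\<delta> < \<epsilon>" using \<open>\<epsilon> > 0\<close> \<open>tol > 0\<close> by (auto simp: \<delta>_def)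
    then have "r + \<delta> \<in> liouville_approximable n"
      unfolding liouville_approximable_def r2 using \<open>q > 0\<close>
      by (intro CollectI exI[of _ "2*p"] exI[of _ "2*q"]) (auto simp: tol_def)
    moreover have "dist (r + \<delta>) r < \<epsilon>" using \<delta> by (simp add: dist_real_def)
    ultimately show "\<exists>y \<in> liouville_approximable n. dist y r < \<epsilon>" by blast
  qed
  then have "closure \<rat> \<subseteq> closure (liouville_approximable n)"
    by (metis closed_closure closure_minimal subsetI)
  then show ?thesis by (simp add: Rats_closure_real top.extremum_unique)
qed

lemma abs_diff_fractions_ge:
  fixes a b p q :: int
  assumes "b > 0" "q > 0" "of_int a / of_int b \<noteq> (of_int p / of_int q :: real)"
  shows "1 / (of_int b * of_int q) \<le> \<bar>of_int a / of_int b - of_int p / of_int q :: real\<bar>"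
proof -
  have "a * q - p * b \<noteq> 0" using assms by (auto simp: frac_eq_eq simp flip: of_int_mult)
  then have "1 \<le> \<bar>real_of_int (a * q - p * b)\<bar>" by linarith
  moreover have "\<bar>of_int a / of_int b - of_int p / of_int q :: real\<bar> = \<bar>real_of_int (a * q - p * b)\<bar> / (of_int b * of_int q)"
    using assms(1,2) by (simp add: field_simps abs_divide)
  ultimately show ?thesis using assms(1,2) by (simp add: divide_right_mono)
qed

lemma irrational_if_liouville_approximable:
  assumes "\<forall>n. z \<in> liouville_approximable n"
  shows "z \<notin> \<rat>"
proof
  assume "z \<in> \<rat>"
  then obtain a b :: int where "b > 0" and z: "z = of_int a / of_int b" by (rule Rats_cases')
  obtain p q :: int where "q \<ge> 2" and pq: "z \<noteq> of_int p / of_int q" "\<bar>z - of_int p / of_int q\<bar> < 1 / of_int q ^ Suc (nat b)"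
    using assms unfolding liouville_approximable_def by blast
  have "1 / (of_int b * of_int q) < 1 / real_of_int q ^ Suc (nat b)"
    using abs_diff_fractions_ge[of b q a p] \<open>b > 0\<close> \<open>q \<ge> 2\<close> pq z by fastforce
  then have "real_of_int q ^ nat b < of_int b"
    using \<open>b > 0\<close> \<open>q \<ge> 2\<close> by (simp add: divide_less_eq field_simps)
  moreover have "real_of_int b < 2 ^ nat b"
  proof -
    have "real (nat b) < real (2 ^ nat b)" by (simp only: of_nat_less_iff less_exp)
    then show ?thesis using \<open>b > 0\<close> by simp
  qed
  moreover have "(2::real) ^ nat b \<le> of_int q ^ nat b" using \<open>q \<ge> 2\<close> by (intro power_mono) auto
  ultimately show False by linarith
qed

lemma liouville_set_if_liouville_approximable:
  assumes approx: "\<forall>n. z \<in> liouville_approximable n"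
  shows "z \<in> liouville_set"
proof -
  have irrational: "z \<notin> \<rat>" using irrational_if_liouville_approximable[OF approx] .
  have "infinite {(y::int, x::int). x \<ge> 1 \<and> \<bar>z - of_int y / of_int x\<bar> \<le> of_int x powr (- \<eta>)}" (is "infinite ?S")
    if "\<eta> > 0" for \<eta> :: real
  proof
    assume "finite ?S"
    text \<open>Since \<open>z\<close> is irrational, the finitely many approximations in \<open>?S\<close> keep \<open>z\<close> at a
      positive distance \<open>d\<close>; a sufficiently good approximation then lies in \<open>?S\<close> yet is closer.\<close>
    define d where "d = Min (insert 1 ((\<lambda>(y, x). \<bar>z - of_int y / of_int x\<bar>) ` ?S))"
    have "\<bar>z - of_int y / of_int x\<bar> > 0" for y x :: int
      using irrational by (metis Rats_divide Rats_of_int zero_less_abs_iff right_minus_eq)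
    then have "d > 0" unfolding d_def using \<open>finite ?S\<close> by (subst Min_gr_iff) auto
    have d_le: "d \<le> \<bar>z - of_int y / of_int x\<bar>" if "(y, x) \<in> ?S" for y x
      unfolding d_def using \<open>finite ?S\<close> that by (intro Min_le) auto
    obtain N where N: "(1/2::real) ^ N < d" using real_arch_pow_inv[OF \<open>d > 0\<close>, of "1/2"] by auto
    define m where "m = N + nat \<lceil>\<eta>\<rceil>"
    obtain p q :: int where "q \<ge> 2" and pq: "z \<noteq> of_int p / of_int q" "\<bar>z - of_int p / of_int q\<bar> < 1 / of_int q ^ m"
      using approx unfolding liouville_approximable_def by blast
    have "1 / real_of_int q ^ m \<le> (1/2) ^ N"
    proof -
      have "1 / real_of_int q ^ m \<le> (1/2) ^ m"
        unfolding power_one_over using \<open>q \<ge> 2\<close> by (intro divide_left_mono power_mono) auto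
      also have "\<dots> \<le> (1/2) ^ N" unfolding m_def by (intro power_decreasing) auto
      finally show ?thesis .
    qed
    then have "\<bar>z - of_int p / of_int q\<bar> < d" using pq(2) N by linarith
    moreover have "1 / real_of_int q ^ m \<le> of_int q powr (- \<eta>)"
    proof -
      have "1 / real_of_int q ^ m = of_int q powr (- real m)"
        using \<open>q \<ge> 2\<close> by (simp add: powr_minus powr_realpow divide_inverse)
      also have "\<dots> \<le> of_int q powr (- \<eta>)"
        using \<open>q \<ge> 2\<close> by (intro powr_mono) (auto simp: m_def, linarith)
      finally show ?thesis .
    qed
    then have "(p, q) \<in> ?S" using \<open>q \<ge> 2\<close> pq(2) by auto
    ultimately show False using d_le by fastforce
  qed
  then show ?thesis unfolding liouville_set_def using irrational by blast
qed

lemma open_powr_vimage: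
  assumes "open T"
  shows "open {z::real. 0 < z \<and> z powr r \<in> T}"
proof -
  have "continuous_on {0<..} (\<lambda>z::real. z powr r)" by (intro continuous_intros) auto
  moreover have "{z. 0 < z \<and> z powr r \<in> T} = {0<..} \<inter> (\<lambda>z. z powr r) -` T" by auto
  ultimately show ?thesis using assms by (metis continuous_open_preimage open_greaterThan)
qed

lemma dense_powr_vimage:
  assumes "r \<noteq> 0" "closure T = UNIV"
  shows "{0<..} \<subseteq> closure {z::real. 0 < z \<and> z powr r \<in> T}"
proof
  fix x :: real assume "x \<in> {0<..}"
  then have "x powr r \<in> closure ({0<..} \<inter> T)"
    using closure_open_Int_superset[of "{0<..}" T] assms(2) by simp
  then obtain w where w: "\<And>n. w n \<in> {0<..} \<inter> T" "w \<longlonglongrightarrow> x powr r"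
    unfolding closure_sequential by blast
  have "(\<lambda>n. w n powr (1/r)) \<longlonglongrightarrow> (x powr r) powr (1/r)"
    using w(2) \<open>x \<in> {0<..}\<close> by (intro tendsto_intros) auto
  also have "(x powr r) powr (1/r) = x" using assms(1) \<open>x \<in> {0<..}\<close> by (simp add: powr_powr)
  finally have "(\<lambda>n. w n powr (1/r)) \<longlonglongrightarrow> x" .
  moreover have "w n powr (1/r) \<in> {z. 0 < z \<and> z powr r \<in> T}" for n
    using w(1)[of n] assms(1) by (simp add: powr_powr)
  ultimately show "x \<in> closure {z. 0 < z \<and> z powr r \<in> T}"
    unfolding closure_sequential by (intro exI[of _ "\<lambda>n. w n powr (1/r)"]) blast
qed

lemma uncountable_liouville_all_rational_powers:
  assumes "open U" "U \<noteq> {}" "U \<subseteq> {0<..}"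
  shows "uncountable {\<zeta> \<in> liouville_set \<inter> U.
            \<forall>a b :: int. a \<noteq> 0 \<longrightarrow> b \<noteq> 0 \<longrightarrow> \<zeta> powr (of_int a / of_int b) \<in> liouville_set}"
proof -
  define \<G> where "\<G> = (\<lambda>(a, b, n). {z. 0 < z \<and> z powr (of_int a / of_int b) \<in> liouville_approximable n})
                        ` {(a::int, b::int, n::nat). a \<noteq> 0 \<and> b \<noteq> 0}"
  have "countable \<G>" unfolding \<G>_def by simp
  moreover have "open T \<and> U \<subseteq> closure T" if "T \<in> \<G>" for T
  proof -
    obtain a b :: int and n where "a \<noteq> 0" "b \<noteq> 0"
      and T: "T = {z. 0 < z \<and> z powr (of_int a / of_int b) \<in> liouville_approximable n}"
      using \<open>T \<in> \<G>\<close> unfolding \<G>_def by auto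
    have "open T" unfolding T by (rule open_powr_vimage[OF open_liouville_approximable])
    moreover have "{0<..} \<subseteq> closure T" unfolding T
      using \<open>a \<noteq> 0\<close> \<open>b \<noteq> 0\<close> by (intro dense_powr_vimage closure_liouville_approximable) simp
    ultimately show ?thesis using assms(3) by blast
  qed
  ultimately have "uncountable (U \<inter> \<Inter>\<G>)"
    by (intro uncountable_Int_Inter_dense_open assms(1,2))
  moreover have "U \<inter> \<Inter>\<G> \<subseteq> {\<zeta> \<in> liouville_set \<inter> U.
            \<forall>a b :: int. a \<noteq> 0 \<longrightarrow> b \<noteq> 0 \<longrightarrow> \<zeta> powr (of_int a / of_int b) \<in> liouville_set}"
  proof safe
    fix z assume z: "z \<in> U" "z \<in> \<Inter>\<G>"
    have rational_power: "z powr (of_int a / of_int b) \<in> liouville_set" if "a \<noteq> 0" "b \<noteq> 0" for a b :: int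
    proof (intro liouville_set_if_liouville_approximable allI)
      fix n
      have "{z. 0 < z \<and> z powr (of_int a / of_int b) \<in> liouville_approximable n} \<in> \<G>"
        unfolding \<G>_def using that by (intro image_eqI[of _ _ "(a, b, n)"]) auto
      then show "z powr (of_int a / of_int b) \<in> liouville_approximable n" using z(2) by blast
    qed
    show "z \<in> liouville_set" using rational_power[of 1 1] z(1) assms(3) by auto
    show "z powr (of_int a / of_int b) \<in> liouville_set" if "a \<noteq> 0" "b \<noteq> 0" for a b :: int
      using rational_power that by blast
  qed
  ultimately show ?thesis using countable_subset by blast
qed

theorem theorem6p1:
  fixes I :: "real set"
  assumes "I \<subseteq> {0<..}" and "interior I \<noteq> {}"
  shows "uncountable {\<zeta> \<in> liouville_set \<inter> {0<..}.
            \<forall>a b :: int. a \<noteq> 0 \<longrightarrow> b \<noteq> 0 \<longrightarrow>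
              \<zeta> powr (of_int a / of_int b) \<in> liouville_set}
       \<and> (\<forall>a b :: int. a \<noteq> 0 \<longrightarrow> b \<noteq> 0 \<longrightarrow>
            uncountable {\<zeta> \<in> liouville_set \<inter> I.
              \<zeta> powr (of_int a / of_int b) \<in> liouville_set})"
proof (intro conjI allI impI)
  show "uncountable {\<zeta> \<in> liouville_set \<inter> {0<..}.
          \<forall>a b :: int. a \<noteq> 0 \<longrightarrow> b \<noteq> 0 \<longrightarrow> \<zeta> powr (of_int a / of_int b) \<in> liouville_set}"
    by (rule uncountable_liouville_all_rational_powers) auto
  fix a b :: int assume "a \<noteq> 0" "b \<noteq> 0"
  have "interior I \<subseteq> {0<..}" using assms(1) interior_subset by blast
  then have "uncountable {\<zeta> \<in> liouville_set \<inter> interior I.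
      \<forall>a b :: int. a \<noteq> 0 \<longrightarrow> b \<noteq> 0 \<longrightarrow> \<zeta> powr (of_int a / of_int b) \<in> liouville_set}"
    using assms(2) by (intro uncountable_liouville_all_rational_powers) auto
  moreover have "{\<zeta> \<in> liouville_set \<inter> interior I.
      \<forall>a b :: int. a \<noteq> 0 \<longrightarrow> b \<noteq> 0 \<longrightarrow> \<zeta> powr (of_int a / of_int b) \<in> liouville_set}
      \<subseteq> {\<zeta> \<in> liouville_set \<inter> I. \<zeta> powr (of_int a / of_int b) \<in> liouville_set}"
    using interior_subset \<open>a \<noteq> 0\<close> \<open>b \<noteq> 0\<close> by blast
  ultimately show "uncountable {\<zeta> \<in> liouville_set \<inter> I. \<zeta> powr (of_int a / of_int b) \<in> liouville_set}"
    using countable_subset by blast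
qed

end
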